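(* Let $A$ be a $\Bbbk$-algebra, $P$ a well-ordered partial semigroup, and $\nu_0:A\setminus\{0\}\to P$ an injective valuation with $\nu_0(A\setminus\{0\})=P$. Let $I\subseteq A$ be a two-sided ideal and put $J:=\nu_0(I\setminus\{0\})$. Then $J$ is an ideal of $P$, so $P\setminus J$ is a partial semigroup under $\circ_J$ (ordered by the restriction of the order of $P$). For $a\in A\setminus I$ put $\nu(a+I):=\min\{\nu_0(a+f):f\in I\}$. Then $\nu:(A/I)\setminus\{0\}\to P\setminus J$ is a surjective injective valuation, and $\nu(a+I)=\nu_0(a)$ whenever $\nu_0(a)\notin J$.
   Context: A partial semigroup is a set $P$ with a partially defined binary operation $\circ$ such that for all $c,c',c''$: $c\circ c'$ and $(c\circ c')\circ c''$ are defined iff $c'\circ c''$ and $c\circ(c'\circ c'')$ are defined, and then they are equal. It is ordered if it carries a linear order $\preceq$ such that $c\preceq d$, $c'\preceq d'$ imply $c\circ c'\preceq d\circ d'$ whenever both compositions are defined; well-ordered if this order is a well-order. A subset $J\subseteq P$ is an ideal if $c\circ d\in J$ and $d\circ c\in J$ for all $c\in P$, $d\in J$ whenever these compositions are defined; then on $P\setminus J$ one defines $c\circ_J d:=c\circ d$ whenever $c\circ d$ is defined and lies in $P\setminus J$ (undefined otherwise). A valuation of a $\Bbbk$-algebra $A$ into an ordered partial semigroup $P$ is a map $\nu:A\setminus\{0\}\to P$ with (i) $\nu(\lambda a)=\nu(a)$ for $\lambda\in\Bbbk^\times$; (ii) $\nu(a+b)\preceq\max(\nu(a),\nu(b))$ when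 $a+b\ne0$; (iii) if $\nu(a)\circ\nu(b)$ is defined then $ab\neq0$ and $\nu(ab)=\nu(a)\circ\nu(b)$. It is injective if there is a basis $\mathbf B$ of $A$ with $\nu|_{\mathbf B}$ injective. *)

theory Defs
  imports Main "HOL.Vector_Spaces"
begin

definition k_algebra :: "('k::field \<Rightarrow> 'a::ring_1 \<Rightarrow> 'a) \<Rightarrow> bool" where
  "k_algebra scale \<longleftrightarrow> module scale \<and>
     (\<forall>c x y. scale c (x * y) = scale c x * y \<and> scale c (x * y) = x * scale c y)"

definition two_sided_ideal :: "('k::field \<Rightarrow> 'a::ring_1 \<Rightarrow> 'a) \<Rightarrow> 'a set \<Rightarrow> bool" where
  "two_sided_ideal scale I \<longleftrightarrow> 0 \<in> I \<and>
     (\<forall>x\<in>I. \<forall>y\<in>I. x + y \<in> I) \<and>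
     (\<forall>c. \<forall>x\<in>I. scale c x \<in> I) \<and>
     (\<forall>a. \<forall>x\<in>I. a * x \<in> I \<and> x * a \<in> I)"

text \<open>The associativity condition with Option.bind says exactly: (c o c') o c'' is
  defined iff c o (c' o c'') is defined, and then they are equal.\<close>
definition partial_semigroup :: "'p set \<Rightarrow> ('p \<Rightarrow> 'p \<Rightarrow> 'p option) \<Rightarrow> bool" where
  "partial_semigroup P ps_op \<longleftrightarrow>
     (\<forall>c\<in>P. \<forall>d\<in>P. \<forall>e. ps_op c d = Some e \<longrightarrow> e \<in> P) \<and>
     (\<forall>c\<in>P. \<forall>c'\<in>P. \<forall>c''\<in>P.
        Option.bind (ps_op c c') (\<lambda>x. ps_op x c'') = Option.bind (ps_op c' c'') (\<lambda>y. ps_op c y))"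

definition ordered_partial_semigroup ::
  "'p set \<Rightarrow> ('p \<Rightarrow> 'p \<Rightarrow> 'p option) \<Rightarrow> ('p \<times> 'p) set \<Rightarrow> bool" where
  "ordered_partial_semigroup P ps_op r \<longleftrightarrow> partial_semigroup P ps_op \<and> linear_order_on P r \<and>
     (\<forall>c d c' d' x y. (c, d) \<in> r \<longrightarrow> (c', d') \<in> r \<longrightarrow> ps_op c c' = Some x \<longrightarrow> ps_op d d' = Some y
        \<longrightarrow> (x, y) \<in> r)"

definition well_ordered_partial_semigroup ::
  "'p set \<Rightarrow> ('p \<Rightarrow> 'p \<Rightarrow> 'p option) \<Rightarrow> ('p \<times> 'p) set \<Rightarrow> bool" where
  "well_ordered_partial_semigroup P ps_op r \<longleftrightarrow>
     ordered_partial_semigroup P ps_op r \<and> well_order_on P r"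

definition ps_ideal :: "'p set \<Rightarrow> ('p \<Rightarrow> 'p \<Rightarrow> 'p option) \<Rightarrow> 'p set \<Rightarrow> bool" where
  "ps_ideal P ps_op J \<longleftrightarrow> J \<subseteq> P \<and>
     (\<forall>c\<in>P. \<forall>d\<in>J. \<forall>x. (ps_op c d = Some x \<longrightarrow> x \<in> J) \<and> (ps_op d c = Some x \<longrightarrow> x \<in> J))"

definition comp_J :: "'p set \<Rightarrow> ('p \<Rightarrow> 'p \<Rightarrow> 'p option) \<Rightarrow> 'p \<Rightarrow> 'p \<Rightarrow> 'p option" where
  "comp_J J ps_op c d = (case ps_op c d of None \<Rightarrow> None | Some x \<Rightarrow> if x \<in> J then None else Some x)"

definition max_r :: "('p \<times> 'p) set \<Rightarrow> 'p \<Rightarrow> 'p \<Rightarrow> 'p" where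
  "max_r r x y = (if (x, y) \<in> r then y else x)"

definition min_r :: "('p \<times> 'p) set \<Rightarrow> 'p set \<Rightarrow> 'p" where
  "min_r r S = (THE m. m \<in> S \<and> (\<forall>x\<in>S. (m, x) \<in> r))"

text \<open>Valuation of the k-algebra A (carrier: all of 'a) into the ordered partial
  semigroup (P, ps_op, r). Only values on A \ {0} matter.\<close>
definition valuation ::
  "('k::field \<Rightarrow> 'a::ring_1 \<Rightarrow> 'a) \<Rightarrow> 'p set \<Rightarrow> ('p \<Rightarrow> 'p \<Rightarrow> 'p option) \<Rightarrow> ('p \<times> 'p) set
     \<Rightarrow> ('a \<Rightarrow> 'p) \<Rightarrow> bool" where
  "valuation scale P ps_op r \<nu> \<longleftrightarrow>
     (\<forall>a. a \<noteq> 0 \<longrightarrow> \<nu> a \<in> P) \<and>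
     (\<forall>c a. c \<noteq> 0 \<longrightarrow> a \<noteq> 0 \<longrightarrow> \<nu> (scale c a) = \<nu> a) \<and>
     (\<forall>a b. a \<noteq> 0 \<longrightarrow> b \<noteq> 0 \<longrightarrow> a + b \<noteq> 0 \<longrightarrow> (\<nu> (a + b), max_r r (\<nu> a) (\<nu> b)) \<in> r) \<and>
     (\<forall>a b x. a \<noteq> 0 \<longrightarrow> b \<noteq> 0 \<longrightarrow> ps_op (\<nu> a) (\<nu> b) = Some x \<longrightarrow> a * b \<noteq> 0 \<and> \<nu> (a * b) = x)"

definition injective_valuation ::
  "('k::field \<Rightarrow> 'a::ring_1 \<Rightarrow> 'a) \<Rightarrow> 'p set \<Rightarrow> ('p \<Rightarrow> 'p \<Rightarrow> 'p option) \<Rightarrow> ('p \<times> 'p) set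
     \<Rightarrow> ('a \<Rightarrow> 'p) \<Rightarrow> bool" where
  "injective_valuation scale P ps_op r \<nu> \<longleftrightarrow> valuation scale P ps_op r \<nu> \<and>
     (\<exists>B. module.independent scale B \<and> module.span scale B = UNIV \<and> inj_on \<nu> B)"

text \<open>Valuations of the quotient algebra A/I, expressed through representatives:
  the element a + I of A/I is nonzero iff a \<notin> I, the operations of A/I are induced
  from A, and a map \<nu> : (A/I) \ {0} \<rightarrow> P is given as a map on A \ I that is
  constant on cosets (\<nu>(a + I) := \<nu> a).\<close>
definition quotient_valuation ::
  "('k::field \<Rightarrow> 'a::ring_1 \<Rightarrow> 'a) \<Rightarrow> 'a set \<Rightarrow> 'p set \<Rightarrow> ('p \<Rightarrow> 'p \<Rightarrow> 'p option)
     \<Rightarrow> ('p \<times> 'p) set \<Rightarrow> ('a \<Rightarrow> 'p) \<Rightarrow> bool" where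
  "quotient_valuation scale I P ps_op r \<nu> \<longleftrightarrow>
     (\<forall>a b. a \<notin> I \<longrightarrow> a - b \<in> I \<longrightarrow> \<nu> a = \<nu> b) \<and>
     (\<forall>a. a \<notin> I \<longrightarrow> \<nu> a \<in> P) \<and>
     (\<forall>c a. c \<noteq> 0 \<longrightarrow> a \<notin> I \<longrightarrow> \<nu> (scale c a) = \<nu> a) \<and>
     (\<forall>a b. a \<notin> I \<longrightarrow> b \<notin> I \<longrightarrow> a + b \<notin> I \<longrightarrow> (\<nu> (a + b), max_r r (\<nu> a) (\<nu> b)) \<in> r) \<and>
     (\<forall>a b x. a \<notin> I \<longrightarrow> b \<notin> I \<longrightarrow> ps_op (\<nu> a) (\<nu> b) = Some x \<longrightarrow> a * b \<notin> I \<and> \<nu> (a * b) = x)"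

text \<open>A basis of A/I is given by a set B \<subseteq> A of representatives with pairwise distinct
  cosets whose cosets are linearly independent in A/I and span A/I.\<close>
definition quotient_basis :: "('k::field \<Rightarrow> 'a::ring_1 \<Rightarrow> 'a) \<Rightarrow> 'a set \<Rightarrow> 'a set \<Rightarrow> bool" where
  "quotient_basis scale I B \<longleftrightarrow>
     (\<forall>b\<in>B. \<forall>b'\<in>B. b - b' \<in> I \<longrightarrow> b = b') \<and>
     (\<forall>S u. finite S \<longrightarrow> S \<subseteq> B \<longrightarrow> (\<Sum>b\<in>S. scale (u b) b) \<in> I \<longrightarrow> (\<forall>b\<in>S. u b = 0)) \<and>
     (\<forall>a. \<exists>S u. finite S \<and> S \<subseteq> B \<and> a - (\<Sum>b\<in>S. scale (u b) b) \<in> I)"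

definition injective_quotient_valuation ::
  "('k::field \<Rightarrow> 'a::ring_1 \<Rightarrow> 'a) \<Rightarrow> 'a set \<Rightarrow> 'p set \<Rightarrow> ('p \<Rightarrow> 'p \<Rightarrow> 'p option)
     \<Rightarrow> ('p \<times> 'p) set \<Rightarrow> ('a \<Rightarrow> 'p) \<Rightarrow> bool" where
  "injective_quotient_valuation scale I P ps_op r \<nu> \<longleftrightarrow> quotient_valuation scale I P ps_op r \<nu> \<and>
     (\<exists>B. quotient_basis scale I B \<and> inj_on \<nu> B)"

end

theory Submission
  imports Defs
begin

text \<open>Because \<nu>0 is injective on a basis, two elements of equal value agree, up to a scalar
  factor, modulo an element of strictly smaller value. Hence the minimum \<nu>(a + I) of \<nu>0 over a
  coset is never the value of a nonzero element of I, and it equals \<nu>0 a unless that value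
  lies in J. Choosing one preimage of every value outside J gives a basis of A/I: a
  nontrivial combination has the value of its leading term, which lies outside J, so it is not
  in I; and every element lies in the span of these preimages and I, by well-founded induction
  on the value, subtracting a multiple of a preimage or of an element of I with the same value.\<close>

lemma linear_order_onD:
  assumes "linear_order_on P r"
  shows "x \<in> P \<Longrightarrow> (x, x) \<in> r"
    and "(x, y) \<in> r \<Longrightarrow> (y, z) \<in> r \<Longrightarrow> (x, z) \<in> r"
    and "(x, y) \<in> r \<Longrightarrow> (y, x) \<in> r \<Longrightarrow> x = y"
    and "x \<in> P \<Longrightarrow> y \<in> P \<Longrightarrow> (x, y) \<in> r \<or> (y, x) \<in> r"
  using assms unfolding order_on_defs
  by (auto simp: refl_on_def total_on_def dest: transD antisymD) metis

lemma well_order_on_min_r: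
  assumes "well_order_on P r" "S \<subseteq> P" "S \<noteq> {}"
  shows "min_r r S \<in> S \<and> (\<forall>x\<in>S. (min_r r S, x) \<in> r)"
proof -
  have lin: "linear_order_on P r" and wf: "wf (r - Id)"
    using assms(1) by (auto simp: well_order_on_def)
  obtain z where z: "z \<in> S" "\<And>y. (y, z) \<in> r - Id \<Longrightarrow> y \<notin> S"
    using wfE_min[OF wf] assms(3) by (metis ex_in_conv)
  have least: "\<forall>x\<in>S. (z, x) \<in> r"
    using z linear_order_onD(4)[OF lin] assms(2) by blast
  have "min_r r S = z"
    unfolding min_r_def using z least linear_order_onD(3)[OF lin] by blast
  with z least show ?thesis by simp
qed

lemma linear_order_on_finite_max:
  assumes "linear_order_on P r" "finite S" "S \<noteq> {}" "h ` S \<subseteq> P"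
  shows "\<exists>m\<in>S. \<forall>x\<in>S. (h x, h m) \<in> r"
  using assms(2,3,4)
proof (induction S rule: finite_ne_induct)
  case (singleton x)
  then show ?case using linear_order_onD(1)[OF assms(1)] by simp
next
  case (insert x F)
  then obtain m where m: "m \<in> F" "\<forall>y\<in>F. (h y, h m) \<in> r" by auto
  have "(h x, h m) \<in> r \<or> (h m, h x) \<in> r"
    using linear_order_onD(4)[OF assms(1)] insert.prems m(1) by blast
  then show ?case
    using m linear_order_onD(1,2)[OF assms(1)] insert.prems by blast
qed

lemma comp_J_Some_iff: "comp_J J ps_op c d = Some x \<longleftrightarrow> ps_op c d = Some x \<and> x \<notin> J"
  by (cases "ps_op c d") (auto simp: comp_J_def)

lemma partial_semigroup_quotient:
  assumes "partial_semigroup P ps_op" "ps_ideal P ps_op J"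
  shows "partial_semigroup (P - J) (comp_J J ps_op)"
proof -
  let ?drop = "\<lambda>y. if y \<in> J then None else Some y"
  have absorb: "ps_op c d = Some x \<Longrightarrow> c \<in> J \<and> d \<in> P \<or> c \<in> P \<and> d \<in> J \<Longrightarrow> x \<in> J" for c d x
    using assms(2) unfolding ps_ideal_def by blast
  show ?thesis
    unfolding partial_semigroup_def
  proof (intro conjI ballI allI impI)
    fix c d e assume "c \<in> P - J" "d \<in> P - J" "comp_J J ps_op c d = Some e"
    then show "e \<in> P - J"
      using assms(1) unfolding partial_semigroup_def comp_J_Some_iff by blast
  next
    fix c c' c'' assume c: "c \<in> P - J" "c' \<in> P - J" "c'' \<in> P - J"
    have "Option.bind (comp_J J ps_op c c') (\<lambda>x. comp_J J ps_op x c'')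
        = Option.bind (Option.bind (ps_op c c') (\<lambda>x. ps_op x c'')) ?drop"
    proof (cases "ps_op c c'")
      case (Some x)
      then show ?thesis
        using absorb[of x c''] c by (cases "ps_op x c''") (auto simp: comp_J_def)
    qed (simp add: comp_J_def)
    also have "\<dots> = Option.bind (Option.bind (ps_op c' c'') (ps_op c)) ?drop"
      using assms(1) c unfolding partial_semigroup_def by simp
    also have "\<dots> = Option.bind (comp_J J ps_op c' c'') (comp_J J ps_op c)"
    proof (cases "ps_op c' c''")
      case (Some y)
      then show ?thesis
        using absorb[of c y] c by (cases "ps_op c y") (auto simp: comp_J_def)
    qed (simp add: comp_J_def)
    finally show "Option.bind (comp_J J ps_op c c') (\<lambda>x. comp_J J ps_op x c'')
        = Option.bind (comp_J J ps_op c' c'') (comp_J J ps_op c)" .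
  qed
qed

lemma well_ordered_partial_semigroup_quotient:
  assumes "well_ordered_partial_semigroup P ps_op r" "ps_ideal P ps_op J"
  shows "well_ordered_partial_semigroup (P - J) (comp_J J ps_op) (Restr r (P - J))"
proof -
  have wo: "well_order_on P r" and ps: "partial_semigroup P ps_op"
    and mono: "\<And>c d c' d' x y. (c, d) \<in> r \<Longrightarrow> (c', d') \<in> r \<Longrightarrow> ps_op c c' = Some x
      \<Longrightarrow> ps_op d d' = Some y \<Longrightarrow> (x, y) \<in> r"
    using assms(1) unfolding well_ordered_partial_semigroup_def ordered_partial_semigroup_def by blast+
  have closed: "c \<in> P \<Longrightarrow> d \<in> P \<Longrightarrow> ps_op c d = Some x \<Longrightarrow> x \<in> P" for c d x
    using ps unfolding partial_semigroup_def by blast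
  have "well_order_on (P - J) (Restr r (P - J))"
    using well_order_on_Restr[of r "P - J"] wo well_order_on_Field[OF wo] by blast
  moreover have "(x, y) \<in> Restr r (P - J)"
    if "(c, d) \<in> Restr r (P - J)" "(c', d') \<in> Restr r (P - J)"
      "comp_J J ps_op c c' = Some x" "comp_J J ps_op d d' = Some y" for c d c' d' x y
    using that mono closed unfolding comp_J_Some_iff by blast
  ultimately show ?thesis
    using partial_semigroup_quotient[OF ps assms(2)]
    unfolding well_ordered_partial_semigroup_def ordered_partial_semigroup_def well_order_on_def
    by blast
qed

locale valued_algebra = vector_space scale
  for scale :: "'k::field \<Rightarrow> 'a::ring_1 \<Rightarrow> 'a" +
  fixes P :: "'p set" and ps_op :: "'p \<Rightarrow> 'p \<Rightarrow> 'p option" and r :: "('p \<times> 'p) set"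
    and \<nu>0 :: "'a \<Rightarrow> 'p"
  assumes linear_order: "linear_order_on P r"
    and valuation: "valuation scale P ps_op r \<nu>0"
begin

lemmas r_trans = linear_order_onD(2)[OF linear_order]
  and r_antisym = linear_order_onD(3)[OF linear_order]

lemma value_in_P: "a \<noteq> 0 \<Longrightarrow> \<nu>0 a \<in> P"
  using valuation by (simp add: valuation_def)

lemma value_scale: "c \<noteq> 0 \<Longrightarrow> a \<noteq> 0 \<Longrightarrow> \<nu>0 (scale c a) = \<nu>0 a"
  using valuation by (simp add: valuation_def)

lemma value_add: "a \<noteq> 0 \<Longrightarrow> b \<noteq> 0 \<Longrightarrow> a + b \<noteq> 0 \<Longrightarrow> (\<nu>0 (a + b), max_r r (\<nu>0 a) (\<nu>0 b)) \<in> r"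
  using valuation by (simp add: valuation_def)

lemma value_mult: "a \<noteq> 0 \<Longrightarrow> b \<noteq> 0 \<Longrightarrow> ps_op (\<nu>0 a) (\<nu>0 b) = Some x \<Longrightarrow> a * b \<noteq> 0 \<and> \<nu>0 (a * b) = x"
  using valuation by (simp add: valuation_def)

lemma value_uminus: "a \<noteq> 0 \<Longrightarrow> \<nu>0 (- a) = \<nu>0 a"
  using value_scale[of "-1" a] by simp

lemma value_add_eq_larger:
  assumes "a \<noteq> 0" "b \<noteq> 0" "(\<nu>0 a, \<nu>0 b) \<in> r" "\<nu>0 a \<noteq> \<nu>0 b"
  shows "a + b \<noteq> 0 \<and> \<nu>0 (a + b) = \<nu>0 b"
proof -
  have ab: "a + b \<noteq> 0"
    using assms value_uminus[OF assms(1)] by (metis add_eq_0_iff)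
  have upper: "(\<nu>0 (a + b), \<nu>0 b) \<in> r"
    using value_add[OF assms(1,2) ab] assms(3) by (simp add: max_r_def)
  have "(\<nu>0 b, max_r r (\<nu>0 (a + b)) (\<nu>0 a)) \<in> r"
    using value_add[OF ab, of "- a"] assms(1,2) value_uminus[OF assms(1)] by simp
  then have "(\<nu>0 b, \<nu>0 (a + b)) \<in> r"
    using assms(3,4) r_antisym unfolding max_r_def by (metis (full_types))
  with upper ab show ?thesis using r_antisym by blast
qed

definition below :: "'p \<Rightarrow> 'a \<Rightarrow> bool" where
  "below p x \<longleftrightarrow> x = 0 \<or> (\<nu>0 x, p) \<in> r \<and> \<nu>0 x \<noteq> p"

lemma below_add:
  assumes "below p x" "below p y"
  shows "below p (x + y)"
proof (cases "x = 0 \<or> y = 0 \<or> x + y = 0")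
  case False
  then have "(\<nu>0 (x + y), max_r r (\<nu>0 x) (\<nu>0 y)) \<in> r"
    using value_add by blast
  moreover have "(max_r r (\<nu>0 x) (\<nu>0 y), p) \<in> r" "max_r r (\<nu>0 x) (\<nu>0 y) \<noteq> p"
    using assms False by (auto simp: below_def max_r_def)
  ultimately show ?thesis
    using r_trans r_antisym unfolding below_def by blast
qed (use assms in \<open>auto simp: below_def\<close>)

lemma below_scale: "below p x \<Longrightarrow> below p (scale c x)"
  by (cases "c = 0"; cases "x = 0") (auto simp: below_def value_scale)

lemma below_diff: "below p x \<Longrightarrow> below p y \<Longrightarrow> below p (x - y)"
  using below_add[of p x "- y"] below_scale[of p y "-1"] by simp

lemma below_sum: "finite S \<Longrightarrow> (\<And>x. x \<in> S \<Longrightarrow> below p (f x)) \<Longrightarrow> below p (sum f S)"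
  by (induction S rule: finite_induct) (auto simp: below_add, simp add: below_def)

lemma combination_leading_term:
  assumes "finite S" "0 \<notin> S" "inj_on \<nu>0 S" "\<exists>b\<in>S. u b \<noteq> 0"
  obtains m where "m \<in> S" "u m \<noteq> 0"
    "(\<Sum>b\<in>S. scale (u b) b) \<noteq> 0" "\<nu>0 (\<Sum>b\<in>S. scale (u b) b) = \<nu>0 m"
    "below (\<nu>0 m) ((\<Sum>b\<in>S. scale (u b) b) - scale (u m) m)"
proof -
  let ?S' = "{b \<in> S. u b \<noteq> 0}"
  obtain m where m: "m \<in> ?S'" "\<forall>b\<in>?S'. (\<nu>0 b, \<nu>0 m) \<in> r"
    using linear_order_on_finite_max[OF linear_order, of ?S' \<nu>0] assms value_in_P by force
  have "m \<noteq> 0"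
    using m(1) assms(2) by auto
  then have lead: "scale (u m) m \<noteq> 0" "\<nu>0 (scale (u m) m) = \<nu>0 m"
    using m(1) value_scale by auto
  have "below (\<nu>0 m) (scale (u b) b)" if "b \<in> S - {m}" for b
  proof (cases "u b = 0")
    case False
    then have "(\<nu>0 b, \<nu>0 m) \<in> r" "\<nu>0 b \<noteq> \<nu>0 m"
      using that m assms(3) inj_on_contraD[OF assms(3)] by auto
    then show ?thesis
      using False that assms(2) value_scale by (auto simp: below_def)
  qed (simp add: below_def)
  then have rest: "below (\<nu>0 m) (\<Sum>b\<in>S - {m}. scale (u b) b)"
    using assms(1) by (intro below_sum) auto
  have split: "(\<Sum>b\<in>S. scale (u b) b) = (\<Sum>b\<in>S - {m}. scale (u b) b) + scale (u m) m"
    using sum.remove[OF assms(1), of m] m(1) by (simp add: add.commute)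
  have "(\<Sum>b\<in>S. scale (u b) b) \<noteq> 0 \<and> \<nu>0 (\<Sum>b\<in>S. scale (u b) b) = \<nu>0 m"
  proof (cases "(\<Sum>b\<in>S - {m}. scale (u b) b) = 0")
    case False
    then show ?thesis
      using value_add_eq_larger[OF False lead(1)] rest lead(2) split by (simp add: below_def)
  qed (use split lead in simp)
  with that[of m] m rest split show ?thesis by simp
qed

lemma basis_leading_element:
  assumes "independent B" "span B = UNIV" "inj_on \<nu>0 B" "x \<noteq> 0"
  obtains e \<mu> where "e \<in> B" "\<mu> \<noteq> 0" "\<nu>0 x = \<nu>0 e" "below (\<nu>0 e) (x - scale \<mu> e)"
proof -
  obtain t u where t: "finite t" "t \<subseteq> B" and x: "x = (\<Sum>b\<in>t. scale (u b) b)"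
    using assms(2) unfolding span_explicit by blast
  have "0 \<notin> t"
    using t(2) assms(1) dependent_zero by blast
  moreover have "\<exists>b\<in>t. u b \<noteq> 0"
    using assms(4) x by (metis (no_types, lifting) scale_zero_left sum.neutral)
  ultimately obtain m where "m \<in> t" "u m \<noteq> 0" "\<nu>0 x = \<nu>0 m" "below (\<nu>0 m) (x - scale (u m) m)"
    using combination_leading_term[OF t(1) _ inj_on_subset[OF assms(3) t(2)], of u]
    unfolding x by blast
  with t(2) that show ?thesis by blast
qed

lemma equal_values_cancel:
  assumes "injective_valuation scale P ps_op r \<nu>0" "a \<noteq> 0" "c \<noteq> 0" "\<nu>0 a = \<nu>0 c"
  obtains l where "below (\<nu>0 a) (a - scale l c)"
proof -
  obtain B where B: "independent B" "span B = UNIV" "inj_on \<nu>0 B"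
    using assms(1) unfolding injective_valuation_def by blast
  obtain e \<mu> where e: "e \<in> B" "\<nu>0 a = \<nu>0 e" "below (\<nu>0 e) (a - scale \<mu> e)"
    using basis_leading_element[OF B assms(2)] by blast
  obtain e' \<mu>' where e': "e' \<in> B" "\<mu>' \<noteq> 0" "\<nu>0 c = \<nu>0 e'" "below (\<nu>0 e') (c - scale \<mu>' e')"
    using basis_leading_element[OF B assms(3)] by blast
  have "e' = e"
    using B(3) e e' assms(4) by (metis inj_onD)
  then have eq: "a - scale (\<mu> / \<mu>') c = (a - scale \<mu> e) - scale (\<mu> / \<mu>') (c - scale \<mu>' e')"
    using e'(2) by (simp add: scale_right_diff_distrib)
  have "below (\<nu>0 a) ((a - scale \<mu> e) - scale (\<mu> / \<mu>') (c - scale \<mu>' e'))"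
    using e e' \<open>e' = e\<close> by (simp add: below_diff below_scale)
  then have "below (\<nu>0 a) (a - scale (\<mu> / \<mu>') c)"
    unfolding eq .
  with that show ?thesis .
qed

end

locale valuation_quotient =
  fixes scale :: "'k::field \<Rightarrow> 'a::ring_1 \<Rightarrow> 'a"
    and P :: "'p set" and ps_op :: "'p \<Rightarrow> 'p \<Rightarrow> 'p option" and r :: "('p \<times> 'p) set"
    and \<nu>0 :: "'a \<Rightarrow> 'p" and I :: "'a set"
  assumes algebra: "k_algebra scale"
    and well_ordered: "well_ordered_partial_semigroup P ps_op r"
    and injective: "injective_valuation scale P ps_op r \<nu>0"
    and surjective: "\<nu>0 ` (UNIV - {0}) = P"
    and ideal: "two_sided_ideal scale I"
begin

lemma well_order: "well_order_on P r"
  using well_ordered by (simp add: well_ordered_partial_semigroup_def)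

sublocale valued_algebra scale P ps_op r \<nu>0
  using algebra well_order injective
  by (intro valued_algebra.intro valued_algebra_axioms.intro)
    (auto simp: k_algebra_def module_iff_vector_space well_order_on_def injective_valuation_def)

lemma subspace_ideal: "subspace I"
  using ideal by (simp add: two_sided_ideal_def subspace_def)

lemma ideal_mult: "f \<in> I \<Longrightarrow> a * f \<in> I \<and> f * a \<in> I"
  using ideal by (simp add: two_sided_ideal_def)

definition J :: "'p set" where
  "J = \<nu>0 ` (I - {0})"

definition \<nu> :: "'a \<Rightarrow> 'p" where
  "\<nu> a = min_r r {\<nu>0 (a + f) | f. f \<in> I}"

lemma value_in_J: "f \<in> I \<Longrightarrow> f \<noteq> 0 \<Longrightarrow> \<nu>0 f \<in> J"
  by (simp add: J_def)

lemma ps_ideal_J: "ps_ideal P ps_op J"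
  unfolding ps_ideal_def
proof (intro conjI ballI allI impI)
  show "J \<subseteq> P"
    using value_in_P by (auto simp: J_def)
next
  fix c d x assume "c \<in> P" "d \<in> J"
  then obtain a f where a: "a \<noteq> 0" "c = \<nu>0 a" and f: "f \<in> I" "f \<noteq> 0" "d = \<nu>0 f"
    using surjective unfolding J_def by blast
  show "x \<in> J" if "ps_op c d = Some x"
    using value_mult[OF a(1) f(2)] that a f ideal_mult[OF f(1), of a] value_in_J by metis
  show "x \<in> J" if "ps_op d c = Some x"
    using value_mult[OF f(2) a(1)] that a f ideal_mult[OF f(1), of a] value_in_J by metis
qed

lemma coset_nonzero: "a \<notin> I \<Longrightarrow> f \<in> I \<Longrightarrow> a + f \<noteq> 0"
  using subspace_neg[OF subspace_ideal] by (metis add_eq_0_iff minus_minus)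

lemma \<nu>_min:
  assumes "a \<notin> I"
  shows \<nu>_attained: "\<exists>f\<in>I. \<nu> a = \<nu>0 (a + f)"
    and \<nu>_le: "f \<in> I \<Longrightarrow> (\<nu> a, \<nu>0 (a + f)) \<in> r"
proof -
  have "{\<nu>0 (a + f) | f. f \<in> I} \<subseteq> P"
    using coset_nonzero[OF assms] value_in_P by auto
  moreover have "{\<nu>0 (a + f) | f. f \<in> I} \<noteq> {}"
    using subspace_0[OF subspace_ideal] by auto
  ultimately have "\<nu> a \<in> {\<nu>0 (a + f) | f. f \<in> I} \<and> (\<forall>x\<in>{\<nu>0 (a + f) | f. f \<in> I}. (\<nu> a, x) \<in> r)"
    unfolding \<nu>_def using well_order_on_min_r[OF well_order] by blast
  then show "\<exists>f\<in>I. \<nu> a = \<nu>0 (a + f)" and "f \<in> I \<Longrightarrow> (\<nu> a, \<nu>0 (a + f)) \<in> r"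
    by blast+
qed

lemma \<nu>_in_P: "a \<notin> I \<Longrightarrow> \<nu> a \<in> P"
  using \<nu>_attained coset_nonzero value_in_P by metis

lemma \<nu>_notin_J:
  assumes "a \<notin> I"
  shows "\<nu> a \<notin> J"
proof
  assume "\<nu> a \<in> J"
  then obtain g where "\<nu> a = \<nu>0 g" "g \<in> I - {0}"
    unfolding J_def by (rule imageE)
  then have g: "g \<in> I" "g \<noteq> 0" "\<nu>0 g = \<nu> a"
    by auto
  obtain f where f: "f \<in> I" "\<nu> a = \<nu>0 (a + f)"
    using \<nu>_attained[OF assms] by blast
  obtain l where l: "below (\<nu> a) (a + (f - scale l g))"
    using equal_values_cancel[OF injective coset_nonzero[OF assms f(1)] g(2)] f(2) g(3)
    by (metis add_diff_eq)
  have h: "f - scale l g \<in> I"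
    using f(1) g(1) subspace_ideal by (simp add: subspace_diff subspace_scale)
  then have "(\<nu>0 (a + (f - scale l g)), \<nu> a) \<in> r" "\<nu>0 (a + (f - scale l g)) \<noteq> \<nu> a"
    using l coset_nonzero[OF assms] by (auto simp: below_def)
  with \<nu>_le[OF assms h] show False
    using r_antisym by blast
qed

lemma \<nu>_eq_value:
  assumes "a \<noteq> 0" "\<nu>0 a \<notin> J"
  shows "\<nu> a = \<nu>0 a"
proof (rule ccontr)
  assume ne: "\<nu> a \<noteq> \<nu>0 a"
  have a: "a \<notin> I"
    using assms value_in_J by blast
  obtain f where f: "f \<in> I" "\<nu> a = \<nu>0 (a + f)"
    using \<nu>_attained[OF a] by blast
  have "(\<nu>0 (a + f), \<nu>0 (- a)) \<in> r" "\<nu>0 (a + f) \<noteq> \<nu>0 (- a)"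
    using \<nu>_le[OF a subspace_0[OF subspace_ideal]] f(2) ne value_uminus[OF assms(1)] by auto
  then have "f \<noteq> 0 \<and> \<nu>0 f = \<nu>0 a"
    using value_add_eq_larger[OF coset_nonzero[OF a f(1)], of "- a"] assms(1) value_uminus[OF assms(1)]
    by simp
  then show False
    using assms(2) value_in_J f(1) by metis
qed

lemma \<nu>_coset:
  assumes "a - b \<in> I"
  shows "\<nu> a = \<nu> b"
proof -
  have "\<forall>f\<in>I. \<exists>g\<in>I. \<nu>0 (a + f) = \<nu>0 (b + g)"
  proof
    fix f assume "f \<in> I"
    then have "(a - b) + f \<in> I"
      using assms subspace_add[OF subspace_ideal] by blast
    moreover have "a + f = b + ((a - b) + f)"
      by (simp add: algebra_simps)
    ultimately show "\<exists>g\<in>I. \<nu>0 (a + f) = \<nu>0 (b + g)" by metis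
  qed
  moreover have "\<forall>f\<in>I. \<exists>g\<in>I. \<nu>0 (b + f) = \<nu>0 (a + g)"
  proof
    fix f assume "f \<in> I"
    then have "f - (a - b) \<in> I"
      using assms subspace_diff[OF subspace_ideal] by blast
    moreover have "b + f = a + (f - (a - b))"
      by (simp add: algebra_simps)
    ultimately show "\<exists>g\<in>I. \<nu>0 (b + f) = \<nu>0 (a + g)" by metis
  qed
  ultimately have "{\<nu>0 (a + f) | f. f \<in> I} = {\<nu>0 (b + f) | f. f \<in> I}"
    by blast
  then show ?thesis
    by (simp add: \<nu>_def)
qed

lemma \<nu>_scale:
  assumes "c \<noteq> 0" "a \<notin> I"
  shows "\<nu> (scale c a) = \<nu> a"
proof -
  have "\<forall>f\<in>I. \<exists>g\<in>I. \<nu>0 (scale c a + f) = \<nu>0 (a + g)"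
  proof
    fix f assume f: "f \<in> I"
    have "scale c a + f = scale c (a + scale (inverse c) f)"
      using assms(1) by (simp add: scale_right_distrib)
    moreover have "scale (inverse c) f \<in> I"
      using f subspace_scale[OF subspace_ideal] by blast
    ultimately show "\<exists>g\<in>I. \<nu>0 (scale c a + f) = \<nu>0 (a + g)"
      using value_scale[OF assms(1) coset_nonzero[OF assms(2)]] by metis
  qed
  moreover have "\<forall>f\<in>I. \<exists>g\<in>I. \<nu>0 (a + f) = \<nu>0 (scale c a + g)"
  proof
    fix f assume f: "f \<in> I"
    have "\<nu>0 (a + f) = \<nu>0 (scale c a + scale c f)"
      using value_scale[OF assms(1) coset_nonzero[OF assms(2) f]] by (simp add: scale_right_distrib)
    then show "\<exists>g\<in>I. \<nu>0 (a + f) = \<nu>0 (scale c a + g)"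
      using f subspace_scale[OF subspace_ideal] by blast
  qed
  ultimately have "{\<nu>0 (scale c a + f) | f. f \<in> I} = {\<nu>0 (a + f) | f. f \<in> I}"
    by blast
  then show ?thesis
    by (simp add: \<nu>_def)
qed

lemma \<nu>_add:
  assumes "a \<notin> I" "b \<notin> I" "a + b \<notin> I"
  shows "(\<nu> (a + b), max_r r (\<nu> a) (\<nu> b)) \<in> r"
proof -
  obtain f g where f: "f \<in> I" "\<nu> a = \<nu>0 (a + f)" and g: "g \<in> I" "\<nu> b = \<nu>0 (b + g)"
    using \<nu>_attained assms(1,2) by metis
  have fg: "f + g \<in> I"
    using f(1) g(1) subspace_add[OF subspace_ideal] by blast
  have sum: "a + b + (f + g) = (a + f) + (b + g)"
    by (simp add: algebra_simps)
  have "(\<nu> (a + b), \<nu>0 ((a + f) + (b + g))) \<in> r"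
    using \<nu>_le[OF assms(3) fg] unfolding sum .
  moreover have "(\<nu>0 ((a + f) + (b + g)), max_r r (\<nu> a) (\<nu> b)) \<in> r"
    using value_add[OF coset_nonzero[OF assms(1) f(1)] coset_nonzero[OF assms(2) g(1)]]
      coset_nonzero[OF assms(3) fg] f(2) g(2) unfolding sum by simp
  ultimately show ?thesis
    using r_trans by blast
qed

lemma \<nu>_mult:
  assumes "a \<notin> I" "b \<notin> I" "ps_op (\<nu> a) (\<nu> b) = Some x" "x \<notin> J"
  shows "a * b \<notin> I \<and> \<nu> (a * b) = x"
proof -
  obtain f g where f: "f \<in> I" "\<nu> a = \<nu>0 (a + f)" and g: "g \<in> I" "\<nu> b = \<nu>0 (b + g)"
    using \<nu>_attained assms(1,2) by metis
  define h where "h = (a + f) * (b + g)"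
  have h: "h \<noteq> 0" "\<nu>0 h = x"
    using value_mult[OF coset_nonzero[OF assms(1) f(1)] coset_nonzero[OF assms(2) g(1)]] assms(3) f g
    unfolding h_def by auto
  have "h - a * b = a * g + f * b + f * g"
    unfolding h_def by (simp add: algebra_simps)
  then have "h - a * b \<in> I"
    using f(1) g(1) ideal_mult subspace_add[OF subspace_ideal] by metis
  moreover have "h \<notin> I"
    using h assms(4) value_in_J by blast
  ultimately have "a * b \<notin> I"
    using subspace_ideal by (metis diff_add_cancel subspace_add)
  moreover have "\<nu> (a * b) = \<nu> h"
    using \<nu>_coset[of h "a * b"] \<open>h - a * b \<in> I\<close> by simp
  ultimately show ?thesis
    using \<nu>_eq_value h assms(4) by simp
qed

definition reps :: "'a set" where
  "reps = inv_into (UNIV - {0}) \<nu>0 ` (P - J)"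

lemma reps:
  assumes "b \<in> reps"
  shows "b \<noteq> 0" "\<nu>0 b \<in> P - J" "b \<notin> I" "\<nu> b = \<nu>0 b"
proof -
  obtain p where p: "p \<in> P - J" "b = inv_into (UNIV - {0}) \<nu>0 p"
    using assms unfolding reps_def by blast
  then show b: "b \<noteq> 0" "\<nu>0 b \<in> P - J"
    using surjective inv_into_into[of p \<nu>0 "UNIV - {0}"] f_inv_into_f[of p \<nu>0 "UNIV - {0}"] by auto
  then show "b \<notin> I" "\<nu> b = \<nu>0 b"
    using value_in_J \<nu>_eq_value by auto
qed

lemma value_reps: "\<nu>0 ` reps = P - J"
  using surjective f_inv_into_f[of _ \<nu>0 "UNIV - {0}"] unfolding reps_def image_image by force

lemma inj_on_reps: "inj_on \<nu>0 reps"
  unfolding reps_def using surjective f_inv_into_f[of _ \<nu>0 "UNIV - {0}"]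
  by (intro inj_onI) (metis DiffD1 imageE)

lemma reps_independent:
  assumes "finite S" "S \<subseteq> reps" "(\<Sum>b\<in>S. scale (u b) b) \<in> I"
  shows "\<forall>b\<in>S. u b = 0"
proof (rule ccontr)
  assume "\<not> (\<forall>b\<in>S. u b = 0)"
  moreover have "0 \<notin> S"
    using assms(2) reps(1) by blast
  ultimately obtain m where "m \<in> S" "(\<Sum>b\<in>S. scale (u b) b) \<noteq> 0" "\<nu>0 (\<Sum>b\<in>S. scale (u b) b) = \<nu>0 m"
    using combination_leading_term[OF assms(1) _ inj_on_subset[OF inj_on_reps assms(2)], of u] by blast
  then show False
    using value_in_J[OF assms(3)] reps(2) assms(2) by auto
qed

lemma value_attained_reps_ideal:
  assumes "p \<in> P"
  shows "\<exists>c\<in>reps \<union> I. c \<noteq> 0 \<and> \<nu>0 c = p"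
proof (cases "p \<in> J")
  case True
  then show ?thesis
    unfolding J_def by blast
next
  case False
  then have "p \<in> \<nu>0 ` reps"
    using value_reps assms by simp
  then show ?thesis
    using reps(1) by blast
qed

lemma span_reps_ideal: "span (reps \<union> I) = UNIV"
proof -
  have wf: "wf (r - Id)"
    using well_order by (simp add: well_order_on_def)
  have "\<forall>a. a \<noteq> 0 \<longrightarrow> \<nu>0 a = p \<longrightarrow> a \<in> span (reps \<union> I)" for p
  proof (induction p rule: wf_induct[OF wf])
    case (1 p)
    show ?case
    proof (intro allI impI)
      fix a assume a: "a \<noteq> 0" "\<nu>0 a = p"
      obtain c where c: "c \<in> reps \<union> I" "c \<noteq> 0" "\<nu>0 c = p"
        using value_attained_reps_ideal[OF value_in_P[OF a(1)]] a(2) by blast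
      obtain l where l: "below p (a - scale l c)"
        using equal_values_cancel[OF injective a(1) c(2)] a(2) c(3) by metis
      have "a - scale l c \<in> span (reps \<union> I)"
      proof (cases "a - scale l c = 0")
        case False
        then show ?thesis
          using l 1 by (auto simp: below_def)
      qed (simp add: span_zero)
      moreover have "scale l c \<in> span (reps \<union> I)"
        using c(1) by (simp add: span_base span_scale)
      ultimately have "(a - scale l c) + scale l c \<in> span (reps \<union> I)"
        by (rule span_add)
      then show "a \<in> span (reps \<union> I)"
        by simp
    qed
  qed
  then have "a \<in> span (reps \<union> I)" for a
    using span_zero by (cases "a = 0") auto
  then show ?thesis
    by blast
qed

lemma quotient_basis_reps: "quotient_basis scale I reps"
  unfolding quotient_basis_def
proof (intro conjI ballI allI impI)
  fix b b' assume "b \<in> reps" "b' \<in> reps" "b - b' \<in> I"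
  then show "b = b'"
    using \<nu>_coset reps(4) inj_on_reps by (metis inj_onD)
next
  fix S u b assume "finite S" "S \<subseteq> reps" "(\<Sum>b\<in>S. scale (u b) b) \<in> I" "b \<in> S"
  then show "u b = 0"
    using reps_independent by blast
next
  fix a
  have "a \<in> {s + f | s f. s \<in> span reps \<and> f \<in> span I}"
    using span_reps_ideal span_Un[of reps I] by simp
  then obtain s f where s: "s \<in> span reps" "f \<in> I" "a = s + f"
    using span_eq_iff[THEN iffD2, OF subspace_ideal] by auto
  then obtain S u where "finite S" "S \<subseteq> reps" "s = (\<Sum>b\<in>S. scale (u b) b)"
    unfolding span_explicit by blast
  with s have "finite S \<and> S \<subseteq> reps \<and> a - (\<Sum>b\<in>S. scale (u b) b) \<in> I"
    by simp
  then show "\<exists>S u. finite S \<and> S \<subseteq> reps \<and> a - (\<Sum>b\<in>S. scale (u b) b) \<in> I"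
    by blast
qed

lemma \<nu>_image: "\<nu> ` (UNIV - I) = P - J"
proof
  show "\<nu> ` (UNIV - I) \<subseteq> P - J"
    using \<nu>_in_P \<nu>_notin_J by blast
  show "P - J \<subseteq> \<nu> ` (UNIV - I)"
  proof
    fix p assume "p \<in> P - J"
    then obtain b where "p = \<nu>0 b" "b \<in> reps"
      unfolding value_reps[symmetric] by (rule imageE)
    then have "p = \<nu> b" "b \<in> UNIV - I"
      using reps(3,4) by auto
    then show "p \<in> \<nu> ` (UNIV - I)"
      by (rule image_eqI)
  qed
qed

lemma quotient_valuation_\<nu>: "quotient_valuation scale I (P - J) (comp_J J ps_op) (Restr r (P - J)) \<nu>"
  unfolding quotient_valuation_def
proof (intro conjI allI impI)
  fix a b assume "a \<notin> I" "a - b \<in> I"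
  then show "\<nu> a = \<nu> b"
    using \<nu>_coset by blast
next
  fix a assume "a \<notin> I"
  then show "\<nu> a \<in> P - J"
    using \<nu>_in_P \<nu>_notin_J by blast
next
  fix c :: 'k and a assume "c \<noteq> 0" "a \<notin> I"
  then show "\<nu> (scale c a) = \<nu> a"
    by (rule \<nu>_scale)
next
  fix a b assume ab: "a \<notin> I" "b \<notin> I" "a + b \<notin> I"
  then have "\<nu> a \<in> P - J" "\<nu> b \<in> P - J" "\<nu> (a + b) \<in> P - J"
    using \<nu>_in_P \<nu>_notin_J by blast+
  then show "(\<nu> (a + b), max_r (Restr r (P - J)) (\<nu> a) (\<nu> b)) \<in> Restr r (P - J)"
    using \<nu>_add[OF ab] by (auto simp: max_r_def)
next
  fix a b x assume "a \<notin> I" "b \<notin> I" "comp_J J ps_op (\<nu> a) (\<nu> b) = Some x"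
  then show "a * b \<notin> I"
    using \<nu>_mult[of a b x] by (simp add: comp_J_Some_iff)
next
  fix a b x assume "a \<notin> I" "b \<notin> I" "comp_J J ps_op (\<nu> a) (\<nu> b) = Some x"
  then show "\<nu> (a * b) = x"
    using \<nu>_mult[of a b x] by (simp add: comp_J_Some_iff)
qed

lemma injective_quotient_valuation_\<nu>:
  "injective_quotient_valuation scale I (P - J) (comp_J J ps_op) (Restr r (P - J)) \<nu>"
  unfolding injective_quotient_valuation_def
  using quotient_valuation_\<nu> quotient_basis_reps inj_on_reps reps(4) by (metis inj_on_cong)

end

theorem mainTheorem9:
  fixes scale :: "'k::field \<Rightarrow> 'a::ring_1 \<Rightarrow> 'a"
    and P :: "'p set" and ps_op :: "'p \<Rightarrow> 'p \<Rightarrow> 'p option" and r :: "('p \<times> 'p) set"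
    and \<nu>0 :: "'a \<Rightarrow> 'p" and I :: "'a set"
  assumes alg: "k_algebra scale"
    and P_wo: "well_ordered_partial_semigroup P ps_op r"
    and val: "injective_valuation scale P ps_op r \<nu>0"
    and surj: "\<nu>0 ` (UNIV - {0}) = P"
    and ideal: "two_sided_ideal scale I"
  defines "J \<equiv> \<nu>0 ` (I - {0})"
    and "\<nu> \<equiv> (\<lambda>a. min_r r {\<nu>0 (a + f) | f. f \<in> I})"
  shows "ps_ideal P ps_op J
    \<and> well_ordered_partial_semigroup (P - J) (comp_J J ps_op) (Restr r (P - J))
    \<and> injective_quotient_valuation scale I (P - J) (comp_J J ps_op) (Restr r (P - J)) \<nu>
    \<and> \<nu> ` (UNIV - I) = P - J
    \<and> (\<forall>a. a \<noteq> 0 \<longrightarrow> \<nu>0 a \<notin> J \<longrightarrow> \<nu> a = \<nu>0 a)"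
proof -
  interpret Q: valuation_quotient scale P ps_op r \<nu>0 I
    using alg P_wo val surj ideal by (rule valuation_quotient.intro)
  have "J = Q.J" "\<nu> = Q.\<nu>"
    unfolding J_def \<nu>_def Q.J_def Q.\<nu>_def[abs_def] by simp_all
  then show ?thesis
    using Q.ps_ideal_J well_ordered_partial_semigroup_quotient[OF P_wo Q.ps_ideal_J]
      Q.injective_quotient_valuation_\<nu> Q.\<nu>_image Q.\<nu>_eq_value
    by simp
qed

end
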